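(* There exists a crystal framework $\mathcal{C}=(G,p)$ in $\mathbb{R}^2$ which is first-order rigid and which is continuously flexible, i.e. there are $t_1>0$ and placements $p_t:V\to\mathbb{R}^2$, $t\in[0,t_1]$, with $p_0=p$, $t\mapsto p_t(v)$ continuous for every vertex $v$, $\|p_t(v)-p_t(w)\|=\|p(v)-p(w)\|$ for every edge $vw\in E$ and every $t$, and such that for some $t$ the placement $p_t$ is not of the form $T\circ p$ for an isometry $T$ of $\mathbb{R}^2$.
   Context: A crystal framework in $\mathbb{R}^d$ is a bar-joint framework $(G,p)$, $G=(V,E)$ a countable simple graph, $p:V\to\mathbb{R}^d$ injective, for which there are $d$ linearly independent vectors $a_1,\dots,a_d$ such that $\mathbb{Z}^d$ acts on $G$ by graph automorphisms $v\mapsto k\cdot v$ with $p(k\cdot v)=p(v)+\sum_ik_ia_i$ and with finitely many orbits of vertices and of edges. An infinitesimal flex is a map $u:V\to\mathbb{C}^d$ with $(u(v)-u(w))\cdot(p(v)-p(w))=0$ for all $vw\in E$; the framework is first-order rigid if every infinitesimal flex lies in the complex linear span of the rigid-motion fields $v\mapsto Sp(v)+b$ ($S$ real skew-symmetric, $b\in\mathbb{R}^d$). *)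

theory Defs
  imports "HOL-Analysis.Analysis"
begin

text \<open>Vertices are natural numbers (every countable graph is isomorphic to one on a
subset of nat).\<close>

definition simple_graph :: "nat set \<Rightarrow> nat set set \<Rightarrow> bool" where
  "simple_graph V E \<longleftrightarrow> (\<forall>e\<in>E. e \<subseteq> V \<and> card e = 2)"

definition lattice_vec :: "real^2 \<Rightarrow> real^2 \<Rightarrow> int \<times> int \<Rightarrow> real^2" where
  "lattice_vec a1 a2 k = of_int (fst k) *\<^sub>R a1 + of_int (snd k) *\<^sub>R a2"

definition graph_aut_action ::
  "nat set \<Rightarrow> nat set set \<Rightarrow> (int \<times> int \<Rightarrow> nat \<Rightarrow> nat) \<Rightarrow> bool" where
  "graph_aut_action V E act \<longleftrightarrow>
     (\<forall>k. \<forall>v\<in>V. act k v \<in> V) \<and>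
     (\<forall>v\<in>V. act (0,0) v = v) \<and>
     (\<forall>k l. \<forall>v\<in>V. act (fst k + fst l, snd k + snd l) v = act k (act l v)) \<and>
     (\<forall>k. \<forall>v\<in>V. \<forall>w\<in>V. {v, w} \<in> E \<longleftrightarrow> {act k v, act k w} \<in> E)"

definition crystal_framework :: "nat set \<Rightarrow> nat set set \<Rightarrow> (nat \<Rightarrow> real^2) \<Rightarrow> bool" where
  "crystal_framework V E p \<longleftrightarrow>
     simple_graph V E \<and> inj_on p V \<and>
     (\<exists>a1 a2 act.
        (\<forall>c1 c2 :: real. c1 *\<^sub>R a1 + c2 *\<^sub>R a2 = 0 \<longrightarrow> c1 = 0 \<and> c2 = 0) \<and>
        graph_aut_action V E act \<and>
        (\<forall>k. \<forall>v\<in>V. p (act k v) = p v + lattice_vec a1 a2 k) \<and>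
        finite ((\<lambda>v. {act k v | k. True}) ` V) \<and>
        finite ((\<lambda>e. {act k ` e | k. True}) ` E))"

definition cvec :: "real^2 \<Rightarrow> complex^2" where
  "cvec x = (\<chi> i. complex_of_real (x $ i))"

definition cdot :: "complex^2 \<Rightarrow> real^2 \<Rightarrow> complex" where
  "cdot u x = (\<Sum>i\<in>UNIV. u $ i * complex_of_real (x $ i))"

definition inf_flex :: "nat set \<Rightarrow> nat set set \<Rightarrow> (nat \<Rightarrow> real^2) \<Rightarrow> (nat \<Rightarrow> complex^2) \<Rightarrow> bool" where
  "inf_flex V E p u \<longleftrightarrow>
     (\<forall>v\<in>V. \<forall>w\<in>V. {v, w} \<in> E \<longrightarrow> cdot (u v - u w) (p v - p w) = 0)"

definition skew :: "real^2^2 \<Rightarrow> bool" where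
  "skew S \<longleftrightarrow> transpose S = - S"

definition in_rigid_span :: "nat set \<Rightarrow> (nat \<Rightarrow> real^2) \<Rightarrow> (nat \<Rightarrow> complex^2) \<Rightarrow> bool" where
  "in_rigid_span V p u \<longleftrightarrow>
     (\<exists>n (c :: nat \<Rightarrow> complex) (S :: nat \<Rightarrow> real^2^2) (b :: nat \<Rightarrow> real^2).
        (\<forall>j<n. skew (S j)) \<and>
        (\<forall>v\<in>V. u v = (\<Sum>j<n. c j *s cvec (S j *v p v + b j))))"

definition first_order_rigid :: "nat set \<Rightarrow> nat set set \<Rightarrow> (nat \<Rightarrow> real^2) \<Rightarrow> bool" where
  "first_order_rigid V E p \<longleftrightarrow> (\<forall>u. inf_flex V E p u \<longrightarrow> in_rigid_span V p u)"

definition isometry2 :: "(real^2 \<Rightarrow> real^2) \<Rightarrow> bool" where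
  "isometry2 T \<longleftrightarrow> (\<forall>x y. dist (T x) (T y) = dist x y)"

definition continuously_flexible :: "nat set \<Rightarrow> nat set set \<Rightarrow> (nat \<Rightarrow> real^2) \<Rightarrow> bool" where
  "continuously_flexible V E p \<longleftrightarrow>
     (\<exists>t1 > 0. \<exists>P :: real \<Rightarrow> nat \<Rightarrow> real^2.
        (\<forall>v\<in>V. P 0 v = p v) \<and>
        (\<forall>v\<in>V. continuous_on {0..t1} (\<lambda>t. P t v)) \<and>
        (\<forall>t\<in>{0..t1}. \<forall>v\<in>V. \<forall>w\<in>V. {v, w} \<in> E \<longrightarrow> dist (P t v) (P t w) = dist (p v) (p w)) \<and>
        (\<exists>t\<in>{0..t1}. \<not> (\<exists>T. isometry2 T \<and> (\<forall>v\<in>V. P t v = T (p v)))))"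

end

(*
  The crystal is a row of vertical triangulated ladders ("strips"), strip n having its rails
  on the lines x = n and x = n + 1/2. Strip n is joined to strip n + 1 by bars of length
  sqrt 2 and to strip n + 2 by bars of length sqrt 8, the bars pointing up-right from even
  strips and down-right from odd ones.

  First-order rigidity: every strip is infinitesimally rigid, so on strip n a flex is a
  rigid field with rotation \<omega>_n and translation b_n. A family of parallel bars between two
  strips forces equal rotations and makes the difference of the translations orthogonal to
  the bars. The bars from strip n to strips n + 1 and n + 2 point along (1, \<epsilon>) and those
  from strip n + 1 to n + 2 along (1, -\<epsilon>), so b_(n+1) = b_(n+2).

  Finite flex: translate the strips rigidly. The sqrt 2-bars stay rigid iff successive
  relative translations lie on a circle, rationally parametrized by s_n; the sqrt 8-bars
  then impose an algebraic relation between s_n and s_(n+1) which can be solved forwards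
  and backwards, keeping s_n in [0, 2]. Starting from s_0 = t gives a continuous motion,
  and at t = 1 strips 0 and 1 are sheared against each other.
*)

theory Submission
  imports Defs "HOL-Library.Countable"
begin

definition vec2 :: "'a::zero \<Rightarrow> 'a \<Rightarrow> 'a^2" where "vec2 a b = vector [a, b]"

lemma vec2_nth [simp]: "vec2 a b $ 1 = a" "vec2 a b $ 2 = b"
  by (simp_all add: vec2_def)

lemma vec2_eq_iff: "x = y \<longleftrightarrow> x $ 1 = y $ 1 \<and> x $ 2 = y $ 2" for x y :: "'a^2"
  by (simp add: vec_eq_iff forall_2)

lemma vec2_add [simp]: "vec2 a b + vec2 c d = vec2 (a + c) (b + d :: 'a::monoid_add)"
  by (simp add: vec2_eq_iff)

lemma vec2_diff [simp]: "vec2 a b - vec2 c d = vec2 (a - c) (b - d :: 'a::group_add)"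
  by (simp add: vec2_eq_iff)

lemma norm_vec2: "norm (vec2 a b) = sqrt (a\<^sup>2 + b\<^sup>2)"
  by (simp add: norm_vec_def L2_set_def sum_2)

lemma continuous_on_vec2 [continuous_intros]:
  fixes f g :: "'a::topological_space \<Rightarrow> real"
  assumes "continuous_on S f" "continuous_on S g"
  shows "continuous_on S (\<lambda>x. vec2 (f x) (g x))"
proof -
  have "vec2 (f x) (g x) = f x *\<^sub>R vec2 1 0 + g x *\<^sub>R vec2 0 1" for x
    by (simp add: vec2_eq_iff)
  then show ?thesis
    using assms by (simp only:) (intro continuous_intros)
qed

definition bi_orbit :: "('a \<Rightarrow> 'a) \<Rightarrow> ('a \<Rightarrow> 'a) \<Rightarrow> 'a \<Rightarrow> int \<Rightarrow> 'a" where
  "bi_orbit f g x n = (if 0 \<le> n then (f ^^ nat n) x else (g ^^ nat (- n)) x)"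

lemma bi_orbit_0 [simp]: "bi_orbit f g x 0 = x"
  by (simp add: bi_orbit_def)

lemma bi_orbit_step:
  "bi_orbit f g x (n + 1) = f (bi_orbit f g x n) \<or> bi_orbit f g x n = g (bi_orbit f g x (n + 1))"
proof (cases "0 \<le> n")
  case True
  then have "nat (n + 1) = Suc (nat n)" by simp
  with True show ?thesis by (simp add: bi_orbit_def)
next
  case False
  then have "nat (- n) = Suc (nat (- (n + 1)))" by simp
  with False show ?thesis by (simp add: bi_orbit_def)
qed

lemma funpow_in:
  assumes "f ` I \<subseteq> I" "x \<in> I"
  shows "(f ^^ m) x \<in> I"
  using assms by (induction m) auto

lemma bi_orbit_in:
  assumes "f ` I \<subseteq> I" "g ` I \<subseteq> I" "x \<in> I"
  shows "bi_orbit f g x n \<in> I"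
  using funpow_in[OF assms(1,3)] funpow_in[OF assms(2,3)] by (simp add: bi_orbit_def)

lemma bi_orbit_rel:
  assumes "f ` I \<subseteq> I" "g ` I \<subseteq> I" "x \<in> I"
    and "\<And>y. y \<in> I \<Longrightarrow> R y (f y)" "\<And>y. y \<in> I \<Longrightarrow> R (g y) y"
  shows "R (bi_orbit f g x n) (bi_orbit f g x (n + 1))"
  using bi_orbit_step[of f g x n] bi_orbit_in[OF assms(1-3)] assms(4,5) by metis

lemma continuous_on_funpow:
  fixes f :: "'a::topological_space \<Rightarrow> 'a"
  assumes "continuous_on UNIV f"
  shows "continuous_on UNIV (f ^^ m)"
proof (induction m)
  case (Suc m)
  then show ?case
    using continuous_on_compose[OF Suc continuous_on_subset[OF assms]] by (simp add: comp_def)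
qed (simp add: id_def continuous_on_id)

lemma continuous_on_bi_orbit:
  fixes f g :: "'a::topological_space \<Rightarrow> 'a"
  assumes "continuous_on UNIV f" "continuous_on UNIV g"
  shows "continuous_on UNIV (\<lambda>x. bi_orbit f g x n)"
  using continuous_on_funpow[OF assms(1), of "nat n"] continuous_on_funpow[OF assms(2), of "nat (- n)"]
  by (cases "0 \<le> n") (simp_all add: bi_orbit_def eta_contract_eq)

definition int_psum :: "(int \<Rightarrow> 'a::ab_group_add) \<Rightarrow> int \<Rightarrow> 'a" where
  "int_psum d n = sum d {0..<n} - sum d {n..<0}"

lemma int_psum_step: "int_psum d (n + 1) = int_psum d n + d n"
proof (cases "0 \<le> n")
  case True
  then have "{0..<n + 1} = insert n {0..<n}" "{n + 1..<0} = {}" "{n..<0} = {}" by auto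
  then show ?thesis by (simp add: int_psum_def)
next
  case False
  then have "{n..<0} = insert n {n + 1..<0}" "{0..<n + 1} = {}" "{0..<n} = {}" by auto
  then show ?thesis by (simp add: int_psum_def)
qed

section \<open>The relative translations of the strips\<close>

text \<open>\<open>(1, 1) + (shift_x s, - shift_y s)\<close> runs over the circle of radius \<open>sqrt 2\<close>:
  the rational parametrization of the rotations of a diagonal bar, with \<open>s = 0\<close> at rest.\<close>

definition shift_x :: "real \<Rightarrow> real" where "shift_x s = 2 * s * (2 - s) / (s\<^sup>2 + 4)"
definition shift_y :: "real \<Rightarrow> real" where "shift_y s = 2 * s * (2 + s) / (s\<^sup>2 + 4)"

lemma square_plus_4_pos: "x\<^sup>2 + 4 > (0::real)"
  by (simp add: add_nonneg_pos)

lemma shift_circle: "(shift_x s)\<^sup>2 + (shift_y s)\<^sup>2 = 2 * (shift_y s - shift_x s)"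
proof -
  have "s\<^sup>2 + 4 \<noteq> 0" using square_plus_4_pos[of s] by linarith
  then show ?thesis unfolding shift_x_def shift_y_def by (simp add: field_simps power2_eq_square) algebra
qed

definition linked :: "real \<Rightarrow> real \<Rightarrow> bool" where
  "linked s r \<longleftrightarrow> (1 - s) * r\<^sup>2 + 4 * r - s\<^sup>2 = 0"

lemma shift_pair_norm:
  "(2 + shift_x s + shift_x r)\<^sup>2 + (2 - shift_y s + shift_y r)\<^sup>2
     = 8 + 32 * ((1 - s) * r\<^sup>2 + 4 * r - s\<^sup>2) / ((s\<^sup>2 + 4) * (r\<^sup>2 + 4))"
proof -
  have "s\<^sup>2 + 4 \<noteq> 0" "r\<^sup>2 + 4 \<noteq> 0" using square_plus_4_pos[of s] square_plus_4_pos[of r] by linarith+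
  then show ?thesis unfolding shift_x_def shift_y_def by (simp add: divide_simps) algebra
qed

lemma linked_shift_pair_norm:
  "linked s r \<Longrightarrow> (2 + shift_x s + shift_x r)\<^sup>2 + (2 - shift_y s + shift_y r)\<^sup>2 = 8"
  by (simp add: shift_pair_norm linked_def)

text \<open>The \<open>max 0\<close> only makes
  \<open>link_fwd\<close> continuous on all of \<open>\<real>\<close>; the radicand is nonnegative on \<open>[0, 2]\<close>.\<close>

definition link_fwd :: "real \<Rightarrow> real" where
  "link_fwd s = s\<^sup>2 / (2 + sqrt (max 0 (4 + (1 - s) * s\<^sup>2)))"

definition link_bwd :: "real \<Rightarrow> real" where
  "link_bwd r = (sqrt (r ^ 4 + 4 * r\<^sup>2 + 16 * r) - r\<^sup>2) / 2"

lemma link_fwd_linked: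
  assumes "s \<in> {0..2}"
  shows "linked s (link_fwd s)"
proof -
  have "s * s\<^sup>2 \<le> 2 * s\<^sup>2" "s\<^sup>2 \<le> 2\<^sup>2"
    using assms power_mono[of s 2 2] by (auto intro: mult_right_mono)
  then have q: "0 \<le> 4 + (1 - s) * s\<^sup>2" by (simp add: algebra_simps)
  define r where "r = sqrt (4 + (1 - s) * s\<^sup>2)"
  have r0: "r \<ge> 0" and r2: "r\<^sup>2 = 4 + (1 - s) * s\<^sup>2" using q by (auto simp: r_def)
  have "link_fwd s = s\<^sup>2 / (2 + r)" using q by (simp add: link_fwd_def r_def)
  moreover have "(1 - s) * (s\<^sup>2 / (2 + r))\<^sup>2 + 4 * (s\<^sup>2 / (2 + r)) - s\<^sup>2
      = s\<^sup>2 * ((1 - s) * s\<^sup>2 + 4 - r\<^sup>2) / (2 + r)\<^sup>2"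
    using r0 by (simp add: divide_simps) algebra
  ultimately show ?thesis using r2 by (simp add: linked_def)
qed

lemma link_fwd_range: "s \<in> {0..2} \<Longrightarrow> link_fwd s \<in> {0..2}"
proof -
  assume s: "s \<in> {0..2}"
  define q where "q = sqrt (max 0 (4 + (1 - s) * s\<^sup>2))"
  have q0: "0 \<le> q" by (simp add: q_def)
  have "s\<^sup>2 / (2 + q) \<le> s\<^sup>2 / 2" using q0 by (intro divide_left_mono) auto
  also have "\<dots> \<le> 2\<^sup>2 / 2" using s by (intro divide_right_mono power_mono) auto
  finally show ?thesis using q0 by (simp add: link_fwd_def flip: q_def)
qed

lemma link_bwd_linked:
  assumes "0 \<le> r"
  shows "linked (link_bwd r) r"
proof -
  define q where "q = sqrt (r ^ 4 + 4 * r\<^sup>2 + 16 * r)"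
  have "q\<^sup>2 = r ^ 4 + 4 * r\<^sup>2 + 16 * r" using assms by (simp add: q_def)
  moreover have "(link_bwd r)\<^sup>2 + link_bwd r * r\<^sup>2 = (q\<^sup>2 - r ^ 4) / 4"
    by (simp add: link_bwd_def flip: q_def) (simp add: field_simps power2_eq_square power4_eq_xxxx)
  ultimately show ?thesis by (simp add: linked_def algebra_simps)
qed

lemma link_bwd_range: "0 \<le> r \<Longrightarrow> link_bwd r \<in> {0..2}"
proof -
  assume r: "0 \<le> r"
  have "r\<^sup>2 \<le> sqrt (r ^ 4 + 4 * r\<^sup>2 + 16 * r)"
    using r by (intro real_le_rsqrt) (simp add: power2_eq_square power4_eq_xxxx)
  moreover have "r ^ 4 + 4 * r\<^sup>2 + 16 * r \<le> (4 + r\<^sup>2)\<^sup>2"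
    using zero_le_power2[of "r - 2"] by (simp add: power2_eq_square power4_eq_xxxx algebra_simps)
  then have "sqrt (r ^ 4 + 4 * r\<^sup>2 + 16 * r) \<le> 4 + r\<^sup>2"
    by (intro real_le_lsqrt) auto
  ultimately show ?thesis by (simp add: link_bwd_def)
qed

lemma continuous_link_fwd: "continuous_on UNIV link_fwd"
proof -
  have "2 + sqrt (max 0 y) \<noteq> 0" for y :: real
    using real_sqrt_ge_zero[of "max 0 y"] by linarith
  then show ?thesis unfolding link_fwd_def by (intro continuous_intros) auto
qed

lemma continuous_link_bwd: "continuous_on UNIV link_bwd"
  unfolding link_bwd_def by (intro continuous_intros) auto

definition flex_param :: "real \<Rightarrow> int \<Rightarrow> real" where
  "flex_param t = bi_orbit link_fwd link_bwd t"

lemma flex_param_range: "t \<in> {0..2} \<Longrightarrow> flex_param t n \<in> {0..2}"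
  unfolding flex_param_def
  by (rule bi_orbit_in) (auto intro: link_fwd_range link_bwd_range)

lemma flex_param_linked: "t \<in> {0..2} \<Longrightarrow> linked (flex_param t n) (flex_param t (n + 1))"
  unfolding flex_param_def
  by (rule bi_orbit_rel[where I = "{0..2}"])
     (auto intro: link_fwd_range link_bwd_range link_fwd_linked link_bwd_linked)

lemma flex_param_at_0: "flex_param 0 n = 0"
  using bi_orbit_in[of link_fwd "{0}" link_bwd 0 n] by (simp add: flex_param_def link_fwd_def link_bwd_def)

lemma continuous_flex_param: "continuous_on UNIV (\<lambda>t. flex_param t n)"
  unfolding flex_param_def by (intro continuous_on_bi_orbit continuous_link_fwd continuous_link_bwd)

definition parity_sign :: "int \<Rightarrow> int" where
  "parity_sign n = (if even n then 1 else -1)"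

lemma parity_sign_succ: "parity_sign (n + 1) = - parity_sign n"
  by (simp add: parity_sign_def)

lemma parity_sign_squared [simp]: "(of_int (parity_sign n) :: 'a::ring_1)\<^sup>2 = 1"
  by (simp add: parity_sign_def)

lemma norm_vec2_sign: "norm (vec2 a (of_int (parity_sign n) * b)) = sqrt (a\<^sup>2 + b\<^sup>2)"
  by (simp add: norm_vec2 power_mult_distrib)

definition strip_step :: "real \<Rightarrow> int \<Rightarrow> real^2" where
  "strip_step t n = vec2 (shift_x (flex_param t n)) (- of_int (parity_sign n) * shift_y (flex_param t n))"

definition strip_shift :: "real \<Rightarrow> int \<Rightarrow> real^2" where
  "strip_shift t = int_psum (strip_step t)"

lemma norm_strip_step_plus:
  "norm (vec2 1 (of_int (parity_sign n)) + strip_step t n) = sqrt 2"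
proof -
  define s where "s = flex_param t n"
  have "vec2 1 (of_int (parity_sign n)) + strip_step t n
      = vec2 (1 + shift_x s) (of_int (parity_sign n) * (1 - shift_y s))"
    by (simp add: strip_step_def s_def algebra_simps)
  moreover have "(1 + shift_x s)\<^sup>2 + (1 - shift_y s)\<^sup>2 = 2"
    using shift_circle[of s] by (simp add: power2_eq_square algebra_simps)
  ultimately show ?thesis by (simp add: norm_vec2_sign)
qed

lemma norm_strip_step_pair_plus:
  assumes "t \<in> {0..2}"
  shows "norm (vec2 2 (2 * of_int (parity_sign n)) + (strip_step t n + strip_step t (n + 1))) = sqrt 8"
proof -
  define s r where "s = flex_param t n" and "r = flex_param t (n + 1)"
  have "vec2 2 (2 * of_int (parity_sign n)) + (strip_step t n + strip_step t (n + 1))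
      = vec2 (2 + shift_x s + shift_x r) (of_int (parity_sign n) * (2 - shift_y s + shift_y r))"
    by (simp add: strip_step_def s_def r_def parity_sign_succ) (simp add: algebra_simps)
  moreover have "(2 + shift_x s + shift_x r)\<^sup>2 + (2 - shift_y s + shift_y r)\<^sup>2 = 8"
    using linked_shift_pair_norm flex_param_linked[OF assms] unfolding s_def r_def by blast
  ultimately show ?thesis by (simp add: norm_vec2_sign)
qed

lemma continuous_shift_x: "continuous_on UNIV shift_x"
  and continuous_shift_y: "continuous_on UNIV shift_y"
  using square_plus_4_pos
  unfolding shift_x_def shift_y_def by (auto intro!: continuous_intros simp: less_imp_neq[symmetric])

lemma continuous_strip_shift: "continuous_on UNIV (\<lambda>t. strip_shift t n)"
proof -
  have "continuous_on UNIV (\<lambda>t. strip_step t k)" for k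
    unfolding strip_step_def
    by (intro continuous_intros continuous_on_compose2[OF continuous_shift_x continuous_flex_param]
        continuous_on_compose2[OF continuous_shift_y continuous_flex_param]) auto
  then show ?thesis
    unfolding strip_shift_def int_psum_def by (intro continuous_intros)
qed

lemma strip_shift_at_0: "strip_shift 0 n = 0"
  by (simp add: strip_shift_def int_psum_def strip_step_def flex_param_at_0 shift_x_def shift_y_def vec2_eq_iff)

section \<open>The crystal and its finite flex\<close>

text \<open>Node \<open>(n, j, False)\<close> sits at \<open>(n, j)\<close> on the left rail of strip \<open>n\<close>, node \<open>(n, j, True)\<close>
  at \<open>(n + 1/2, j + 1/2)\<close> on its right rail. An entry \<open>(e, dn, dj, e')\<close> of \<open>bar_offsets n\<close> is a
  bar from \<open>(n, j, e)\<close> to \<open>(n + dn, j + dj, e')\<close>: the first four triangulate the strip, the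
  last two are the \<open>sqrt 2\<close>- and \<open>sqrt 8\<close>-bars to the strips \<open>n + 1\<close> and \<open>n + 2\<close>.\<close>

type_synonym node = "int \<times> int \<times> bool"

definition node_pos :: "node \<Rightarrow> real^2" where
  "node_pos x = (case x of (n, j, e) \<Rightarrow>
     vec2 (of_int n + (if e then 1/2 else 0)) (of_int j + (if e then 1/2 else 0)))"

definition node_strip :: "node \<Rightarrow> int" where
  "node_strip x = fst x"

definition bar_offsets :: "int \<Rightarrow> (bool \<times> int \<times> int \<times> bool) list" where
  "bar_offsets n =
     [(False, 0, 1, False), (True, 0, 1, True), (False, 0, 0, True), (True, 0, 1, False),
      (False, 1, parity_sign n, False), (False, 2, 2 * parity_sign n, False)]"

definition bar :: "node \<Rightarrow> node \<Rightarrow> bool" where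
  "bar x y \<longleftrightarrow> (\<exists>n j e dn dj e'. (e, dn, dj, e') \<in> set (bar_offsets n) \<and>
     x = (n, j, e) \<and> y = (n + dn, j + dj, e'))"

lemma bar_cases:
  assumes "bar x y"
  obtains "node_strip y = node_strip x"
  | "node_strip y = node_strip x + 1"
    "node_pos y - node_pos x = vec2 1 (of_int (parity_sign (node_strip x)))"
  | "node_strip y = node_strip x + 2"
    "node_pos y - node_pos x = vec2 2 (2 * of_int (parity_sign (node_strip x)))"
  using assms by (auto simp: bar_def bar_offsets_def node_strip_def node_pos_def)

lemma strip_shift_diff:
  "strip_shift t (n + 1) - strip_shift t n = strip_step t n"
  "strip_shift t (n + 2) - strip_shift t n = strip_step t n + strip_step t (n + 1)"
  using int_psum_step[of "strip_step t" n] int_psum_step[of "strip_step t" "n + 1"]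
  by (simp_all add: strip_shift_def add.assoc)

lemma dist_translate: "dist (a + A) (b + B) = norm ((b - a) + (B - A))"
  for a b A B :: "'a::real_normed_vector"
  by (metis dist_norm norm_minus_commute add_diff_add)

lemma flex_preserves_bar:
  assumes "bar x y" "t \<in> {0..2}"
  shows "dist (node_pos x + strip_shift t (node_strip x)) (node_pos y + strip_shift t (node_strip y))
       = dist (node_pos x) (node_pos y)"
proof -
  have "norm ((node_pos y - node_pos x) + (strip_shift t (node_strip y) - strip_shift t (node_strip x)))
      = norm (node_pos y - node_pos x)"
    using assms(1)
  proof (cases rule: bar_cases)
    case 2
    then show ?thesis by (simp add: strip_shift_diff norm_strip_step_plus norm_vec2)
  next
    case 3
    moreover have "sqrt 8 = sqrt (2\<^sup>2 + (2 * of_int (parity_sign (node_strip x)))\<^sup>2)"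
      by (simp add: power_mult_distrib)
    ultimately show ?thesis
      using norm_strip_step_pair_plus[OF assms(2)] by (simp add: strip_shift_diff norm_vec2)
  qed simp
  then show ?thesis by (metis dist_translate dist_commute dist_norm)
qed

section \<open>First-order rigidity\<close>

lemma bar_instances:
  "bar (n, j, False) (n, j + 1, False)" "bar (n, j, True) (n, j + 1, True)"
  "bar (n, j, False) (n, j, True)" "bar (n, j, True) (n, j + 1, False)"
  "bar (n, j, False) (n + 1, j + parity_sign n, False)"
  "bar (n, j, False) (n + 2, j + 2 * parity_sign n, False)"
  unfolding bar_def bar_offsets_def by (auto intro!: exI[of _ n] exI[of _ j])

definition rigid_field :: "complex \<Rightarrow> complex^2 \<Rightarrow> real^2 \<Rightarrow> complex^2" where
  "rigid_field \<omega> b q = b + \<omega> *s cvec (vec2 (- q $ 2) (q $ 1))"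

lemma cdot_vec2: "cdot u (vec2 a b) = u $ 1 * of_real a + u $ 2 * of_real b"
  by (simp add: cdot_def sum_2)

lemma cdot_diff_left: "cdot (u - v) x = cdot u x - cdot v x"
  by (simp add: cdot_def algebra_simps sum_subtractf)

lemma cdot_add_left: "cdot (u + v) x = cdot u x + cdot v x"
  by (simp add: cdot_def algebra_simps sum.distrib)

lemma cdot_rigid_field:
  "cdot (rigid_field \<omega> b q) d = cdot b d + \<omega> * of_real (q $ 1 * d $ 2 - q $ 2 * d $ 1)"
  by (simp add: rigid_field_def cdot_def cvec_def sum_2 algebra_simps)

lemma rigid_field_diff:
  "rigid_field \<omega> b q - rigid_field \<omega>' b' q = rigid_field (\<omega> - \<omega>') (b - b') q"
  by (simp add: rigid_field_def vec_eq_iff algebra_simps)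

lemma cdot_rigid_field_increment: "cdot (rigid_field \<omega> b p - rigid_field \<omega> b q) (p - q) = 0"
  by (simp add: cdot_diff_left cdot_rigid_field algebra_simps)

lemma cdot_eq_0_independent:
  assumes "cdot w a = 0" "cdot w c = 0" "a $ 1 * c $ 2 \<noteq> a $ 2 * c $ 1"
  shows "w = 0"
proof -
  have "w $ 1 * of_real (a $ 1 * c $ 2 - a $ 2 * c $ 1)
      = of_real (c $ 2) * cdot w a - of_real (a $ 2) * cdot w c"
    "w $ 2 * of_real (a $ 1 * c $ 2 - a $ 2 * c $ 1)
      = of_real (a $ 1) * cdot w c - of_real (c $ 1) * cdot w a"
    by (simp_all add: cdot_def sum_2 algebra_simps)
  then have "w $ 1 * of_real (a $ 1 * c $ 2 - a $ 2 * c $ 1) = 0"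
       "w $ 2 * of_real (a $ 1 * c $ 2 - a $ 2 * c $ 1) = 0"
    using assms(1,2) by simp_all
  moreover have "complex_of_real (a $ 1 * c $ 2 - a $ 2 * c $ 1) \<noteq> 0"
    using assms(3) by (simp only: of_real_eq_0_iff)
  ultimately show ?thesis by (simp add: vec2_eq_iff del: of_real_diff of_real_mult)
qed

definition node_flex :: "(node \<Rightarrow> complex^2) \<Rightarrow> bool" where
  "node_flex u \<longleftrightarrow> (\<forall>x y. bar x y \<longrightarrow> cdot (u x - u y) (node_pos x - node_pos y) = 0)"

lemma node_flex_minus_rigid:
  assumes "node_flex u"
  shows "node_flex (\<lambda>x. u x - rigid_field \<omega> b (node_pos x))"
  unfolding node_flex_def
proof (intro allI impI)
  fix x y assume "bar x y"
  define R where "R z = rigid_field \<omega> b (node_pos z)" for z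
  have "(u x - R x) - (u y - R y) = (u x - u y) - (R x - R y)"
    by (simp add: algebra_simps)
  then have "cdot ((u x - R x) - (u y - R y)) (node_pos x - node_pos y)
      = cdot (u x - u y) (node_pos x - node_pos y) - cdot (R x - R y) (node_pos x - node_pos y)"
    by (simp only: cdot_diff_left)
  moreover have "cdot (u x - u y) (node_pos x - node_pos y) = 0"
    using assms \<open>bar x y\<close> unfolding node_flex_def by blast
  ultimately show "cdot ((u x - R x) - (u y - R y)) (node_pos x - node_pos y) = 0"
    by (simp add: R_def cdot_rigid_field_increment)
qed

lemma node_flex_bar_sym:
  assumes "node_flex w" "bar x y \<or> bar y x"
  shows "cdot (w x - w y) (node_pos x - node_pos y) = 0"
proof -
  have "cdot (w y - w x) (node_pos y - node_pos x) = cdot (w x - w y) (node_pos x - node_pos y)"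
    by (simp add: cdot_def algebra_simps sum_2)
  then show ?thesis using assms unfolding node_flex_def by metis
qed

lemma node_flex_vanishing_triangle:
  assumes "node_flex w" "bar x y \<or> bar y x" "bar x z \<or> bar z x" "w y = 0" "w z = 0"
    and "(node_pos x - node_pos y) $ 1 * (node_pos x - node_pos z) $ 2
       \<noteq> (node_pos x - node_pos y) $ 2 * (node_pos x - node_pos z) $ 1"
  shows "w x = 0"
proof (rule cdot_eq_0_independent[OF _ _ assms(6)])
  show "cdot (w x) (node_pos x - node_pos y) = 0" "cdot (w x) (node_pos x - node_pos z) = 0"
    using node_flex_bar_sym[OF assms(1,2)] node_flex_bar_sym[OF assms(1,3)] assms(4,5) by simp_all
qed

lemma strip_rung_vanishing_step:
  assumes "node_flex w"
  shows "w (n, j, False) = 0 \<and> w (n, j, True) = 0 \<longleftrightarrow> w (n, j + 1, False) = 0 \<and> w (n, j + 1, True) = 0"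
proof -
  note triangle = node_flex_vanishing_triangle[OF assms]
  show ?thesis
  proof
    assume 0: "w (n, j, False) = 0 \<and> w (n, j, True) = 0"
    then have "w (n, j + 1, False) = 0"
      using triangle[of "(n, j + 1, False)" "(n, j, False)" "(n, j, True)"]
      by (simp add: bar_instances node_pos_def)
    with 0 show "w (n, j + 1, False) = 0 \<and> w (n, j + 1, True) = 0"
      using triangle[of "(n, j + 1, True)" "(n, j, True)" "(n, j + 1, False)"]
      by (simp add: bar_instances node_pos_def)
  next
    assume 1: "w (n, j + 1, False) = 0 \<and> w (n, j + 1, True) = 0"
    then have "w (n, j, True) = 0"
      using triangle[of "(n, j, True)" "(n, j + 1, True)" "(n, j + 1, False)"]
      by (simp add: bar_instances node_pos_def)
    with 1 show "w (n, j, False) = 0 \<and> w (n, j, True) = 0"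
      using triangle[of "(n, j, False)" "(n, j + 1, False)" "(n, j, True)"]
      by (simp add: bar_instances node_pos_def)
  qed
qed

lemma strip_vanishing:
  assumes "node_flex w" "w (n, 0, False) = 0" "w (n, 0, True) = 0"
  shows "w (n, j, e) = 0"
proof -
  have "w (n, j, False) = 0 \<and> w (n, j, True) = 0"
  proof (induction j rule: int_induct[where k = 0])
    case base
    then show ?case using assms(2,3) by simp
  next
    case (step1 j)
    then show ?case using strip_rung_vanishing_step[OF assms(1)] by blast
  next
    case (step2 j)
    then show ?case using strip_rung_vanishing_step[OF assms(1), of n "j - 1"] by simp
  qed
  then show ?thesis by (cases e) simp_all
qed

lemma strip_rigid:
  assumes "node_flex u"
  obtains \<omega> b where "\<And>j e. u (n, j, e) = rigid_field \<omega> b (node_pos (n, j, e))"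
proof -
  define \<delta> where "\<delta> = u (n, 0, True) - u (n, 0, False)"
  have "cdot (u (n, 0, False) - u (n, 0, True)) (node_pos (n, 0, False) - node_pos (n, 0, True)) = 0"
    using assms bar_instances(3) unfolding node_flex_def by blast
  moreover have "cdot (u (n, 0, False) - u (n, 0, True)) (node_pos (n, 0, False) - node_pos (n, 0, True))
      = (\<delta> $ 1 + \<delta> $ 2) / 2"
    by (simp add: \<delta>_def node_pos_def cdot_vec2 field_simps)
  ultimately have \<delta>: "\<delta> $ 1 + \<delta> $ 2 = 0" by simp
  \<comment> \<open>the rigid field that agrees with \<open>u\<close> at both nodes of the rung \<open>(n, 0)\<close>\<close>
  define \<omega> where "\<omega> = \<delta> $ 2 - \<delta> $ 1"
  define b where "b = u (n, 0, False) - rigid_field \<omega> 0 (node_pos (n, 0, False))"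
  define w where "w x = u x - rigid_field \<omega> b (node_pos x)" for x
  have "u (n, 0, True) = u (n, 0, False) + \<delta>"
    by (simp add: \<delta>_def)
  then have "w (n, 0, True) = 0"
    using \<delta> by (simp add: w_def b_def \<omega>_def rigid_field_def node_pos_def cvec_def vec2_eq_iff field_simps)
      algebra
  moreover have "w (n, 0, False) = 0"
    by (simp add: w_def b_def rigid_field_def)
  ultimately have "w (n, j, e) = 0" for j e
    using strip_vanishing node_flex_minus_rigid[OF assms] unfolding w_def by blast
  then show ?thesis by (intro that[of \<omega> b]) (simp add: w_def)
qed

lemma rigid_field_orthogonal_on_vertical_line:
  assumes "\<And>j::int. cdot (rigid_field \<omega> b (q + vec2 0 (of_int j))) d = 0" "d $ 1 \<noteq> 0"
  shows "\<omega> = 0" "cdot b d = 0"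
proof -
  have "\<omega> * of_real (d $ 1) = 0"
    using assms(1)[of 0] assms(1)[of 1] by (simp add: cdot_rigid_field algebra_simps)
  then show "\<omega> = 0" using assms(2) by simp
  then show "cdot b d = 0" using assms(1)[of 0] by (simp add: cdot_rigid_field)
qed

lemma rigid_strips_glued:
  assumes "node_flex u"
    and "\<And>j e. u (n, j, e) = rigid_field \<omega> b (node_pos (n, j, e))"
    and "\<And>j e. u (m, j, e) = rigid_field \<omega>' b' (node_pos (m, j, e))"
    and "\<And>j. bar (n, j, False) (m, j + k, False)" "m \<noteq> n"
  shows "\<omega>' = \<omega>" "cdot (b' - b) (vec2 (of_int (m - n)) (of_int k)) = 0"
proof -
  define d :: "real^2" where "d = vec2 (of_int (m - n)) (of_int k)"
  have on_line: "cdot (rigid_field (\<omega>' - \<omega>) (b' - b) (vec2 (of_int n) 0 + vec2 0 (of_int j))) d = 0" for j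
  proof -
    define p q where "p = node_pos (n, j, False)" and "q = node_pos (m, j + k, False)"
    have "cdot (u (m, j + k, False) - u (n, j, False)) (q - p) = 0"
      unfolding p_def q_def by (rule node_flex_bar_sym[OF assms(1)]) (simp add: assms(4))
    moreover have "u (m, j + k, False) - u (n, j, False)
        = (rigid_field \<omega>' b' q - rigid_field \<omega>' b' p) + rigid_field (\<omega>' - \<omega>) (b' - b) p"
      unfolding assms(2,3) p_def[symmetric] q_def[symmetric] rigid_field_diff[symmetric] by simp
    ultimately have "cdot (rigid_field (\<omega>' - \<omega>) (b' - b) p) (q - p) = 0"
      using cdot_rigid_field_increment[of \<omega>' b' q p] by (simp add: cdot_add_left)
    moreover have "q - p = d" "p = vec2 (of_int n) 0 + vec2 0 (of_int j)"
      by (simp_all add: p_def q_def d_def node_pos_def)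
    ultimately show ?thesis by simp
  qed
  moreover have "d $ 1 \<noteq> 0" using assms(5) by (simp add: d_def)
  ultimately have "\<omega>' - \<omega> = 0" "cdot (b' - b) d = 0"
    by (rule rigid_field_orthogonal_on_vertical_line)+
  then show "\<omega>' = \<omega>" "cdot (b' - b) d = 0" by simp_all
qed

lemma int_succ_invariant_const:
  assumes "\<And>n::int. f (n + 1) = f n"
  shows "f n = f 0"
proof (induction n rule: int_induct[where k = 0])
  case (step2 n)
  then show ?case using assms[of "n - 1"] by simp
qed (simp_all add: assms)

lemma cdot_vec2_scale: "cdot w (vec2 (c * a) (c * b)) = of_real c * cdot w (vec2 a b)"
  by (simp add: cdot_vec2 algebra_simps)

lemma node_flex_rigid:
  assumes "node_flex u"
  obtains \<omega> b where "\<And>x. u x = rigid_field \<omega> b (node_pos x)"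
proof -
  have "\<forall>n. \<exists>\<omega> b. \<forall>j e. u (n, j, e) = rigid_field \<omega> b (node_pos (n, j, e))"
    using strip_rigid[OF assms] by metis
  then obtain \<Omega> B where R: "\<And>n j e. u (n, j, e) = rigid_field (\<Omega> n) (B n) (node_pos (n, j, e))"
    by metis
  define \<epsilon> where "\<epsilon> n = (of_int (parity_sign n) :: real)" for n
  have e: "\<Omega> (n + 1) = \<Omega> n" "cdot (B (n + 1) - B n) (vec2 1 (\<epsilon> n)) = 0" for n
    using rigid_strips_glued[OF assms R R bar_instances(5), of n] by (simp_all add: \<epsilon>_def)
  have f: "cdot (B (n + 2) - B n) (vec2 1 (\<epsilon> n)) = 0" for n
    using rigid_strips_glued(2)[OF assms R R bar_instances(6), of n] cdot_vec2_scale[of _ 2 1]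
    by (simp add: \<epsilon>_def)
  have B_step: "B (n + 2) - B (n + 1) = 0" for n
  proof (rule cdot_eq_0_independent)
    have "B (n + 2) - B (n + 1) = (B (n + 2) - B n) - (B (n + 1) - B n)" by simp
    then show "cdot (B (n + 2) - B (n + 1)) (vec2 1 (\<epsilon> n)) = 0"
      using e(2) f by (simp only: cdot_diff_left) simp
    show "cdot (B (n + 2) - B (n + 1)) (vec2 1 (- \<epsilon> n)) = 0"
      using e(2)[of "n + 1"] by (simp add: \<epsilon>_def parity_sign_succ add.assoc)
    show "vec2 1 (\<epsilon> n) $ 1 * vec2 1 (- \<epsilon> n) $ 2 \<noteq> vec2 1 (\<epsilon> n) $ 2 * vec2 1 (- \<epsilon> n) $ 1"
      by (simp add: \<epsilon>_def parity_sign_def)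
  qed
  have "B (n + 1) = B n" for n
    using B_step[of "n - 1"] by (simp add: algebra_simps)
  then have "\<Omega> n = \<Omega> 0" "B n = B 0" for n
    using e(1) by (blast intro: int_succ_invariant_const)+
  with R show ?thesis by (intro that[of "\<Omega> 0" "B 0"]) (metis prod_cases3)
qed

definition rot90 :: "real^2^2" where
  "rot90 = vector [vector [0, -1], vector [1, 0]]"

lemma rot90_mult: "rot90 *v q = vec2 (- q $ 2) (q $ 1)"
  by (simp add: rot90_def vec2_def matrix_vector_mult_def vec_eq_iff forall_2 sum_2)

lemma skew_rot90: "skew rot90"
  by (simp add: skew_def rot90_def transpose_def vec_eq_iff forall_2)

lemma skew_0: "skew 0"
  by (simp add: skew_def transpose_def vec_eq_iff)

lemma in_rigid_span_rigid_field:
  assumes "\<And>v. v \<in> V \<Longrightarrow> u v = rigid_field \<omega> b (p v)"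
  shows "in_rigid_span V p u"
proof -
  define c where "c j = (if j = 0 then \<omega> else if j = 1 then b $ 1 else b $ 2)" for j :: nat
  define S :: "nat \<Rightarrow> real^2^2" where "S j = (if j = 0 then rot90 else 0)" for j
  define t :: "nat \<Rightarrow> real^2" where "t j = (if j = 0 then 0 else if j = 1 then vec2 1 0 else vec2 0 1)" for j
  have "rigid_field \<omega> b q = (\<Sum>j<3. c j *s cvec (S j *v q + t j))" for q
    by (simp add: eval_nat_numeral c_def S_def t_def rigid_field_def rot90_mult cvec_def vec2_eq_iff)
  moreover have "\<forall>j<3. skew (S j)"
    by (simp add: S_def skew_rot90 skew_0)
  ultimately show ?thesis
    unfolding in_rigid_span_def using assms by (intro exI[of _ 3] exI[of _ c] exI[of _ S] exI[of _ t]) simp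
qed

text \<open>The bar pattern alternates with the parity of the strip index, so the period lattice is
  spanned by \<open>(2, 0)\<close> and \<open>(0, 1)\<close>.\<close>

definition node_translate :: "int \<times> int \<Rightarrow> node \<Rightarrow> node" where
  "node_translate k x = (case x of (n, j, e) \<Rightarrow> (n + 2 * fst k, j + snd k, e))"

lemma parity_sign_translate [simp]: "parity_sign (n + 2 * m) = parity_sign n"
  by (simp add: parity_sign_def)

lemma bar_translate: "bar x y \<Longrightarrow> bar (node_translate k x) (node_translate k y)"
  unfolding bar_def node_translate_def
  by (elim exE conjE, rule_tac x = "n + 2 * fst k" in exI, rule_tac x = "j + snd k" in exI)
     (auto simp: bar_offsets_def)

lemma bar_translate_iff: "bar (node_translate k x) (node_translate k y) \<longleftrightarrow> bar x y"
proof
  have "node_translate (- fst k, - snd k) (node_translate k z) = z" for z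
    by (cases z) (simp add: node_translate_def)
  then show "bar (node_translate k x) (node_translate k y) \<Longrightarrow> bar x y"
    using bar_translate[of "node_translate k x" "node_translate k y" "(- fst k, - snd k)"] by simp
qed (rule bar_translate)

lemma bar_irrefl: "bar x y \<Longrightarrow> x \<noteq> y"
  by (auto simp: bar_def bar_offsets_def parity_sign_def)

lemma inj_node_pos: "inj node_pos"
proof (rule injI)
  fix x y assume "node_pos x = node_pos y"
  moreover obtain n j e n' j' e' where xy: "x = (n, j, e)" "y = (n', j', e')" by (metis prod_cases3)
  ultimately have "2 * n + (if e then 1 else 0) = 2 * n' + (if e' then 1 else 0)"
      "2 * j + (if e then 1 else 0) = 2 * j' + (if e' then 1 else 0)"
    by (simp_all add: node_pos_def vec2_eq_iff field_simps flip: of_int_eq_iff) (simp_all split: if_splits)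
  then show "x = y" using xy by (cases e; cases e'; simp) presburger+
qed

lemma node_pos_translate:
  "node_pos (node_translate k x) = node_pos x + lattice_vec (vec2 2 0) (vec2 0 1) k"
  by (cases x) (simp add: node_pos_def node_translate_def lattice_vec_def vec2_eq_iff)

definition node_class :: "node \<Rightarrow> bool \<times> bool" where
  "node_class x = (case x of (n, j, e) \<Rightarrow> (even n, e))"

lemma range_node_translate: "range (\<lambda>k. node_translate k x) = {z. node_class z = node_class x}"
proof -
  obtain n j e where x: "x = (n, j, e)" by (metis prod_cases3)
  have "z \<in> range (\<lambda>k. node_translate k x)" if "node_class z = node_class x" for z
  proof -
    obtain m i e' where z: "z = (m, i, e')" by (metis prod_cases3)
    with that x have "z = node_translate ((m - n) div 2, i - j) x"
      by (auto simp: node_class_def node_translate_def elim!: evenE oddE)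
    then show ?thesis by blast
  qed
  moreover have "node_class (node_translate k x) = node_class x" for k
    by (simp add: x node_class_def node_translate_def)
  ultimately show ?thesis by blast
qed

definition crystal_V :: "nat set" where
  "crystal_V = range (to_nat :: node \<Rightarrow> nat)"

definition crystal_E :: "nat set set" where
  "crystal_E = {{to_nat x, to_nat y} | x y :: node. bar x y}"

definition crystal_p :: "nat \<Rightarrow> real^2" where
  "crystal_p v = node_pos (from_nat v)"

definition crystal_act :: "int \<times> int \<Rightarrow> nat \<Rightarrow> nat" where
  "crystal_act k v = to_nat (node_translate k (from_nat v))"

lemma crystal_act_to_nat [simp]: "crystal_act k (to_nat x) = to_nat (node_translate k x)"
  by (simp add: crystal_act_def)

lemma crystal_E_iff: "{to_nat x, to_nat y} \<in> crystal_E \<longleftrightarrow> bar x y \<or> bar y x"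
  unfolding crystal_E_def by (auto simp: doubleton_eq_iff simp del: split_paired_Ex)

lemma graph_aut_action_crystal: "graph_aut_action crystal_V crystal_E crystal_act"
proof -
  have "node_translate (fst k + fst l, snd k + snd l) x = node_translate k (node_translate l x)" for k l x
    by (cases x) (simp add: node_translate_def algebra_simps)
  moreover have "node_translate (0, 0) x = x" for x
    by (cases x) (simp add: node_translate_def)
  ultimately show ?thesis
    by (auto simp: graph_aut_action_def crystal_V_def crystal_E_iff bar_translate_iff)
qed

lemma finite_vertex_orbits: "finite ((\<lambda>v. {crystal_act k v | k. True}) ` crystal_V)"
proof -
  have "{crystal_act k (to_nat x) | k. True} = to_nat ` range (\<lambda>k. node_translate k x)" for x
    by (auto simp del: split_paired_Ex)
  then have "{crystal_act k (to_nat x) | k. True} = to_nat ` {z. node_class z = node_class x}" for x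
    by (simp only: range_node_translate)
  then have "(\<lambda>v. {crystal_act k v | k. True}) ` crystal_V
      \<subseteq> (\<lambda>c. to_nat ` {z. node_class z = c}) ` UNIV"
    by (auto simp: crystal_V_def)
  then show ?thesis by (rule finite_subset) simp
qed

lemma finite_edge_orbits: "finite ((\<lambda>E. {crystal_act k ` E | k. True}) ` crystal_E)"
proof -
  define G :: "bool \<times> bool \<Rightarrow> int \<Rightarrow> int \<Rightarrow> bool \<Rightarrow> nat set set"
    where "G c dn dj e' = (\<lambda>z. {to_nat z, to_nat (fst z + dn, fst (snd z) + dj, e')})
      ` {z. node_class z = c}" for c dn dj e'
  have "(\<lambda>E. {crystal_act k ` E | k. True}) ` crystal_E
      \<subseteq> (\<lambda>(c, dn, dj, e'). G c dn dj e') ` (UNIV \<times> {0..2} \<times> {-2..2} \<times> UNIV)"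
  proof
    fix Q assume "Q \<in> (\<lambda>E. {crystal_act k ` E | k. True}) ` crystal_E"
    then obtain x y where "bar x y" and Q: "Q = {crystal_act k ` {to_nat x, to_nat y} | k. True}"
      by (auto simp: crystal_E_def)
    then obtain n j e dn dj e' where off: "(e, dn, dj, e') \<in> set (bar_offsets n)"
      and xy: "x = (n, j, e)" "y = (n + dn, j + dj, e')"
      by (auto simp: bar_def)
    have "Q = (\<lambda>k. {to_nat (node_translate k x), to_nat (node_translate k y)}) ` UNIV"
      by (auto simp: Q simp del: split_paired_Ex)
    also have "\<dots> = (\<lambda>z. {to_nat z, to_nat (fst z + dn, fst (snd z) + dj, e')})
        ` range (\<lambda>k. node_translate k x)"
      by (auto simp: xy node_translate_def algebra_simps)
    also have "\<dots> = G (node_class x) dn dj e'"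
      by (simp add: G_def range_node_translate)
    finally have "Q = (\<lambda>(c, dn, dj, e'). G c dn dj e') (node_class x, dn, dj, e')"
      by simp
    moreover have "(node_class x, dn, dj, e') \<in> UNIV \<times> {0..2} \<times> {-2..2} \<times> UNIV"
      using off by (auto simp: bar_offsets_def parity_sign_def split: if_splits)
    ultimately show "Q \<in> (\<lambda>(c, dn, dj, e'). G c dn dj e') ` (UNIV \<times> {0..2} \<times> {-2..2} \<times> UNIV)"
      by (rule image_eqI)
  qed
  then show ?thesis by (rule finite_subset) simp
qed

lemma crystal_framework_crystal: "crystal_framework crystal_V crystal_E crystal_p"
proof -
  have "card {to_nat x, to_nat y} = 2" if "bar x y" for x y :: node
    using bar_irrefl[OF that] by simp
  then have "simple_graph crystal_V crystal_E"
    unfolding simple_graph_def crystal_E_def crystal_V_def by blast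
  moreover have "inj_on crystal_p crystal_V"
    using inj_node_pos by (auto simp: inj_on_def crystal_V_def crystal_p_def)
  moreover have "\<forall>c1 c2 :: real. c1 *\<^sub>R vec2 2 0 + c2 *\<^sub>R vec2 0 1 = (0 :: real^2) \<longrightarrow> c1 = 0 \<and> c2 = 0"
    by (simp add: vec2_eq_iff)
  moreover have "\<forall>k. \<forall>v\<in>crystal_V. crystal_p (crystal_act k v) = crystal_p v + lattice_vec (vec2 2 0) (vec2 0 1) k"
    by (auto simp: crystal_V_def crystal_p_def node_pos_translate)
  ultimately show ?thesis
    unfolding crystal_framework_def
    using graph_aut_action_crystal finite_vertex_orbits finite_edge_orbits by blast
qed

lemma first_order_rigid_crystal: "first_order_rigid crystal_V crystal_E crystal_p"
  unfolding first_order_rigid_def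
proof (intro allI impI)
  fix u assume "inf_flex crystal_V crystal_E crystal_p u"
  then have "node_flex (u \<circ> to_nat)"
    by (auto simp: inf_flex_def node_flex_def crystal_V_def crystal_p_def crystal_E_iff)
  then obtain \<omega> b where "\<And>x. u (to_nat x) = rigid_field \<omega> b (node_pos x)"
    using node_flex_rigid by (metis comp_apply)
  then show "in_rigid_span crystal_V crystal_p u"
    by (intro in_rigid_span_rigid_field) (auto simp: crystal_V_def crystal_p_def)
qed

definition crystal_motion :: "real \<Rightarrow> nat \<Rightarrow> real^2" where
  "crystal_motion t v = node_pos (from_nat v) + strip_shift t (node_strip (from_nat v))"

lemma crystal_motion_not_rigid:
  "\<not> (\<exists>T. isometry2 T \<and> (\<forall>v\<in>crystal_V. crystal_motion 1 v = T (crystal_p v)))"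
proof
  assume "\<exists>T. isometry2 T \<and> (\<forall>v\<in>crystal_V. crystal_motion 1 v = T (crystal_p v))"
  then obtain T where "isometry2 T" and T: "\<And>x. crystal_motion 1 (to_nat x) = T (node_pos x)"
    by (auto simp: crystal_V_def crystal_p_def simp del: split_paired_All)
  have "dist (crystal_motion 1 (to_nat ((0, 0, False) :: node))) (crystal_motion 1 (to_nat ((1, 0, False) :: node)))
      = dist (node_pos (0, 0, False)) (node_pos (1, 0, False))"
    using \<open>isometry2 T\<close> by (simp add: T isometry2_def)
  moreover have "strip_shift 1 1 - strip_shift 1 0 = vec2 (2 / 5) (- 6 / 5)"
    using strip_shift_diff(1)[of 1 0]
    by (simp add: strip_step_def flex_param_def parity_sign_def shift_x_def shift_y_def)
  ultimately have "norm (vec2 (7 / 5) (- 6 / 5) :: real^2) = norm (vec2 (- 1) 0 :: real^2)"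
    by (simp add: crystal_motion_def node_strip_def node_pos_def dist_norm norm_minus_commute
        algebra_simps)
  then show False by (simp add: norm_vec2 power2_eq_square)
qed

lemma continuously_flexible_crystal: "continuously_flexible crystal_V crystal_E crystal_p"
  unfolding continuously_flexible_def
proof (intro exI[of _ "1 :: real"] conjI exI[of _ crystal_motion])
  show "\<forall>v\<in>crystal_V. crystal_motion 0 v = crystal_p v"
    by (simp add: crystal_motion_def crystal_p_def strip_shift_at_0)
  show "\<forall>v\<in>crystal_V. continuous_on {0..1} (\<lambda>t. crystal_motion t v)"
    unfolding crystal_motion_def
    by (intro ballI continuous_intros continuous_on_subset[OF continuous_strip_shift]) simp
  show "\<forall>t\<in>{0..1}. \<forall>v\<in>crystal_V. \<forall>w\<in>crystal_V. {v, w} \<in> crystal_E \<longrightarrow>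
      dist (crystal_motion t v) (crystal_motion t w) = dist (crystal_p v) (crystal_p w)"
  proof (intro ballI impI)
    fix t v w assume "t \<in> {0..1::real}" "v \<in> crystal_V" "w \<in> crystal_V" "{v, w} \<in> crystal_E"
    then obtain x y where xy: "v = to_nat x" "w = to_nat y" "bar x y \<or> bar y x" and "t \<in> {0..2}"
      by (auto simp: crystal_V_def crystal_E_iff)
    then show "dist (crystal_motion t v) (crystal_motion t w) = dist (crystal_p v) (crystal_p w)"
      using flex_preserves_bar[of x y t] flex_preserves_bar[of y x t]
      by (auto simp: crystal_motion_def crystal_p_def dist_commute)
  qed
  show "\<exists>t\<in>{0..1}. \<not> (\<exists>T. isometry2 T \<and> (\<forall>v\<in>crystal_V. crystal_motion t v = T (crystal_p v)))"
    using crystal_motion_not_rigid by (intro bexI[of _ 1]) auto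
qed simp

theorem mainTheorem4:
  shows "\<exists>(V :: nat set) (E :: nat set set) (p :: nat \<Rightarrow> real^2).
           crystal_framework V E p \<and> first_order_rigid V E p \<and> continuously_flexible V E p"
  using crystal_framework_crystal first_order_rigid_crystal continuously_flexible_crystal by blast

end
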